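(* For any $g\ge2$, $n\ge1$ and any $a_1,\dots,a_n\in\mathbb{Z}_{\ge0}$ with $a_1+\cdots+a_n=2g-3+n$, $$P_{g,n+1}(a_1,\dots,a_n,1)=(2n-2)\,P_{g,n}(a_1,\dots,a_n).$$ In particular $P_{g,2}(2g-2,1)=0$, and for $n\ge2$ the vanishing of $P_{g,n}(a_1,\dots,a_n)$ implies the vanishing of $P_{g,n+1}(a_1,\dots,a_n,1)$.
   Context: For $g\ge2$, $m\ge1$, $$P_{g,m}(a_1,\dots,a_m):=\sum_{k=1}^m\frac{(-1)^k(2g-3+k)!}{k!}\sum_{(I_1,\dots,I_k)}\ \sum_{\substack{d_1,\dots,d_k\in\mathbb{Z}_{\ge0}\\ d_1+\cdots+d_k=g-2+m}}\prod_{j=1}^k\binom{2a_{[I_j]}+1}{2d_j}\prod_{i=1}^{|I_j|-1}(2d_j+1-2i),$$ where $(I_1,\dots,I_k)$ runs over ordered $k$-tuples of nonempty pairwise disjoint subsets of $\{1,\dots,m\}$ with union $\{1,\dots,m\}$, $a_{[I]}:=\sum_{\ell\in I}a_\ell$, and $\binom{x}{r}$ is the usual binomial coefficient (zero if $r>x$). *)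

theory Defs
  imports Main "HOL.Binomial" "HOL.Real"
begin

definition ordered_set_partitions :: "nat \<Rightarrow> nat \<Rightarrow> (nat \<Rightarrow> nat set) set" where
  "ordered_set_partitions m k =
     {I. (\<forall>j<k. I j \<noteq> {}) \<and> (\<forall>j<k. \<forall>l<k. j \<noteq> l \<longrightarrow> I j \<inter> I l = {})
         \<and> (\<Union>j<k. I j) = {1..m} \<and> (\<forall>j\<ge>k. I j = {})}"

definition weak_compositions :: "nat \<Rightarrow> nat \<Rightarrow> (nat \<Rightarrow> nat) set" where
  "weak_compositions k N = {d. (\<forall>j\<ge>k. d j = 0) \<and> (\<Sum>j<k. d j) = N}"

text \<open>P_{g,m}(a_1,...,a_m); the arguments a_1..a_m are the values a 1, ..., a m.\<close>
definition P :: "nat \<Rightarrow> nat \<Rightarrow> (nat \<Rightarrow> nat) \<Rightarrow> real" where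
  "P g m a =
    (\<Sum>k=1..m. (-1)^k * fact (2*g-3+k) / fact k *
      (\<Sum>I\<in>ordered_set_partitions m k. \<Sum>d\<in>weak_compositions k (g-2+m).
         \<Prod>j<k. real ((2 * (\<Sum>l\<in>I j. a l) + 1) choose (2 * d j)) *
                (\<Prod>i=1..card (I j) - 1. 2 * real (d j) + 1 - 2 * real i)))"

end

theory Submission
  imports Defs
begin

text \<open>
  P_{g,m} is a sum over ordered set partitions of products of block weights
  w(s,A,d) = binom(2A+1, 2d) * prod_{i=1}^{s-1} (2d+1-2i), one per block of size s and a-sum A.
  A partition of {1..n+1} comes from a partition of {1..n} in one of two ways. Either {n+1} is
  a new block, whose weight w(1,1,e) = binom(3, 2e) is 1 or 3 for e = 0, 1 and vanishes
  otherwise; or n+1 joins an existing block, and the recurrence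
  w(s+1,A+1,d) = (2d+1-2s) w(s,A,d) + (4A+5-2d) w(s,A,d-1), summed over the blocks and the
  compositions of the degree, yields coefficients that depend only on n, k, the sum of the a_i
  and the degree g-2+n. Together with c_{k+1} (k+1) = -(2g-2+k) c_k for the prefactors
  c_k = (-1)^k (2g-3+k)!/k!, everything cancels except (2n-2) P_{g,n} once the a_i sum to 2g-3+n.
\<close>

section \<open>Block weights\<close>

definition block_weight :: "nat \<Rightarrow> nat \<Rightarrow> nat \<Rightarrow> real" where
  "block_weight s A d = real ((2*A+1) choose (2*d)) * (\<Prod>i=1..s-1. 2*real d + 1 - 2*real i)"

lemma prod_shift_by_two:
  "(\<Prod>i=1..Suc m. (x::real) + 2 - 2*real i) = x * (\<Prod>i=1..m. x - 2*real i)"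
proof (induction m)
  case (Suc m)
  have "(\<Prod>i=1..Suc (Suc m). x + 2 - 2*real i)
      = (\<Prod>i=1..Suc m. x + 2 - 2*real i) * (x - 2*real (Suc m))"
    by (simp add: algebra_simps)
  also have "\<dots> = x * (\<Prod>i=1..Suc m. x - 2*real i)"
    using Suc by simp
  finally show ?case .
qed simp

lemma of_nat_Suc_times_binomial:
  "real (Suc k) * real (n choose Suc k) = (real n - real k) * real (n choose k)"
proof (cases "k \<le> n")
  case True
  have "Suc k * (n choose Suc k) = (n - k) * (n choose k)"
  proof (cases n)
    case (Suc m)
    then show ?thesis
      using Suc_times_binomial[of k m] binomial_absorb_comp[of n k] by simp
  qed simp
  then have "real (Suc k * (n choose Suc k)) = real ((n - k) * (n choose k))"
    by (rule arg_cong)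
  then show ?thesis
    using True by (simp add: algebra_simps)
qed (simp add: binomial_eq_0)

lemma block_weight_Suc_Suc_0:
  "s \<ge> 1 \<Longrightarrow> block_weight (Suc s) (Suc A) 0 = (1 - 2*real s) * block_weight s A 0"
  by (cases s) (auto simp: block_weight_def)

text \<open>Pascal's rule applied twice to \<open>2A+3 choose 2e+2\<close>, together with the absorption identity
  for \<open>2A+1 choose 2e+1\<close>, splits the weight into the two terms.\<close>
lemma block_weight_Suc_Suc_Suc:
  assumes "s \<ge> 1"
  shows "block_weight (Suc s) (Suc A) (Suc e)
       = (2*real e + 3 - 2*real s) * block_weight s A (Suc e)
         + (4*real A + 3 - 2*real e) * block_weight s A e"
proof -
  obtain m where s: "s = Suc m" using assms by (cases s) auto
  define U where "U = (\<Prod>i=1..m. 2*real e + 1 - 2*real i)"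
  define V where "V = (\<Prod>i=1..m. 2*real (Suc e) + 1 - 2*real i)"
  define x where "x = real ((2*A+1) choose (2*e))"
  define y where "y = real ((2*A+1) choose Suc (2*e))"
  define z where "z = real ((2*A+1) choose Suc (Suc (2*e)))"
  have prod_U: "(\<Prod>i=1..Suc m. 2*real (Suc e) + 1 - 2*real i) = (2*real e + 1) * U"
    using prod_shift_by_two[where m=m and x="2*real e + 1"] unfolding U_def by (simp add: algebra_simps)
  have prod_V: "(\<Prod>i=1..Suc m. 2*real (Suc e) + 1 - 2*real i) = V * (2*real e + 3 - 2*real s)"
    unfolding V_def s by (simp add: algebra_simps)
  have pascal: "real ((2*Suc A+1) choose (2*Suc e)) = x + 2*y + z"
    unfolding x_def y_def z_def by (simp add: numeral_2_eq_2)
  have absorb: "(2*real e + 1) * y = (2*real A + 1 - 2*real e) * x"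
    using of_nat_Suc_times_binomial[of "2*e" "2*A+1"] unfolding x_def y_def by (simp add: add.commute)
  have "block_weight (Suc s) (Suc A) (Suc e) = (x + 2*y + z) * ((2*real e + 1) * U)"
    unfolding block_weight_def pascal using prod_U s by simp
  also have "\<dots> = z * ((2*real e + 1) * U) + 2 * ((2*real e + 1) * y) * U + (2*real e + 1) * x * U"
    by (simp add: algebra_simps)
  also have "\<dots> = (2*real e + 3 - 2*real s) * (z * V) + (4*real A + 3 - 2*real e) * (x * U)"
    unfolding absorb prod_U[symmetric] prod_V by (simp add: algebra_simps)
  also have "\<dots> = (2*real e + 3 - 2*real s) * block_weight s A (Suc e)
               + (4*real A + 3 - 2*real e) * block_weight s A e"
    unfolding block_weight_def x_def z_def U_def V_def s by (simp add: numeral_2_eq_2)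
  finally show ?thesis .
qed

lemma block_weight_Suc_Suc:
  assumes "s \<ge> 1"
  shows "block_weight (Suc s) (Suc A) d = (2*real d + 1 - 2*real s) * block_weight s A d
           + (if 0 < d then (4*real A + 5 - 2*real d) * block_weight s A (d-1) else 0)"
proof (cases d)
  case 0 then show ?thesis using block_weight_Suc_Suc_0[OF assms] by simp
next
  case (Suc e) then show ?thesis using block_weight_Suc_Suc_Suc[OF assms, of A e] by (simp add: algebra_simps)
qed

section \<open>Weak compositions\<close>

lemma mem_weak_compositions:
  "d \<in> weak_compositions k N \<longleftrightarrow> (\<forall>j\<ge>k. d j = 0) \<and> (\<Sum>j<k. d j) = N"
  by (simp add: weak_compositions_def)

lemma finite_weak_compositions: "finite (weak_compositions k N)"
proof (rule finite_subset)
  show "weak_compositions k N \<subseteq> {d. \<forall>x. (x \<in> {..<k} \<longrightarrow> d x \<in> {..N}) \<and> (x \<notin> {..<k} \<longrightarrow> d x = 0)}"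
  proof (intro subsetI CollectI allI conjI impI)
    fix d x assume d: "d \<in> weak_compositions k N"
    show "d x = 0" if "x \<notin> {..<k}" using d that by (simp add: mem_weak_compositions)
    show "d x \<in> {..N}" if "x \<in> {..<k}"
      using d member_le_sum[of x "{..<k}" d] that by (simp add: mem_weak_compositions)
  qed
  show "finite {d. \<forall>x. (x \<in> {..<k} \<longrightarrow> d x \<in> {..N}) \<and> (x \<notin> {..<k} \<longrightarrow> (d::nat\<Rightarrow>nat) x = 0)}"
    by (rule finite_set_of_finite_funs) auto
qed

lemma sum_lessThan_fun_upd:
  "j < (k::nat) \<Longrightarrow> (\<Sum>l<k. (d(j:=x)) l) + d j = (\<Sum>l<k. d l) + (x::'a::comm_monoid_add)"
  by (simp add: sum.remove[of "{..<k}" j] add_ac sum.cong[of "{..<k}-{j}" _ "d(j:=x)" d])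

lemma sum_weak_compositions_decrement:
  assumes j: "j < k"
  shows "(\<Sum>d\<in>weak_compositions k (Suc M). if 0 < d j then F (d(j := d j - 1)) else 0)
         = (\<Sum>d\<in>weak_compositions k M. (F d :: 'a::comm_monoid_add))"
proof -
  have "(\<Sum>d\<in>weak_compositions k (Suc M). if 0 < d j then F (d(j := d j - 1)) else 0)
      = (\<Sum>d\<in>{d\<in>weak_compositions k (Suc M). 0 < d j}. F (d(j := d j - 1)))"
    by (rule sum.inter_filter[symmetric]) (rule finite_weak_compositions)
  also have "\<dots> = (\<Sum>d\<in>weak_compositions k M. F d)"
  proof (rule sum.reindex_bij_witness[where i="\<lambda>d. d(j := Suc (d j))" and j="\<lambda>d. d(j := d j - 1)"])
    fix d assume d: "d \<in> {d\<in>weak_compositions k (Suc M). 0 < d j}"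
    then show "d(j := d j - 1, j := Suc ((d(j := d j - 1)) j)) = d" by auto
    from d show "d(j := d j - 1) \<in> weak_compositions k M"
      using sum_lessThan_fun_upd[OF j, of d "d j - 1"] j by (auto simp: mem_weak_compositions)
  next
    fix d assume d: "d \<in> weak_compositions k M"
    then show "d(j := Suc (d j), j := (d(j := Suc (d j))) j - 1) = d" by auto
    from d show "d(j := Suc (d j)) \<in> {d\<in>weak_compositions k (Suc M). 0 < d j}"
      using sum_lessThan_fun_upd[OF j, of d "Suc (d j)"] j by (auto simp: mem_weak_compositions)
  qed simp
  finally show ?thesis .
qed

lemma prod_lessThan_if_add:
  assumes j: "j < (k::nat)"
  shows "(\<Prod>l<k. if l = j then c * v j + b * w else v l)
         = c * (\<Prod>l<k. v l) + b * (\<Prod>l<k. if l = j then w else (v l :: 'a::comm_ring_1))"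
proof -
  have remove_j: "(\<Prod>l<k. h l) = h j * (\<Prod>l\<in>{..<k}-{j}. v l)" if "\<forall>l\<noteq>j. h l = v l" for h
    using j that by (simp add: prod.remove[of "{..<k}" j])
  show ?thesis
    by (subst (1 2 3) remove_j; simp add: algebra_simps)
qed

lemma prod_block_weight_grow:
  fixes s A d :: "nat \<Rightarrow> nat"
  assumes "s j \<ge> 1" and j: "j < k"
  defines "W \<equiv> \<lambda>d. \<Prod>l<k. block_weight (s l) (A l) (d l)"
  shows "(\<Prod>l<k. if l = j then block_weight (Suc (s l)) (Suc (A l)) (d l) else block_weight (s l) (A l) (d l))
       = (2*real (d j) + 1 - 2*real (s j)) * W d
         + (if 0 < d j then (4*real (A j) + 3 - 2*real ((d(j := d j - 1)) j)) * W (d(j := d j - 1)) else 0)"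
proof -
  have "(\<Prod>l<k. if l = j then block_weight (Suc (s l)) (Suc (A l)) (d l) else block_weight (s l) (A l) (d l))
     = (\<Prod>l<k. if l = j then (2*real (d j) + 1 - 2*real (s j)) * block_weight (s j) (A j) (d j)
           + (if 0 < d j then 4*real (A j) + 5 - 2*real (d j) else 0) * block_weight (s j) (A j) (d j - 1)
         else block_weight (s l) (A l) (d l))"
    using assms(1) by (intro prod.cong refl) (auto simp: block_weight_Suc_Suc)
  also have "\<dots> = (2*real (d j) + 1 - 2*real (s j)) * W d
      + (if 0 < d j then 4*real (A j) + 5 - 2*real (d j) else 0)
        * (\<Prod>l<k. if l = j then block_weight (s j) (A j) (d j - 1) else block_weight (s l) (A l) (d l))"
    unfolding W_def by (rule prod_lessThan_if_add[OF j])
  also have "(\<Prod>l<k. if l = j then block_weight (s j) (A j) (d j - 1) else block_weight (s l) (A l) (d l))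
      = W (d(j := d j - 1))"
    unfolding W_def by (intro prod.cong) auto
  finally show ?thesis by (cases "d j") (auto simp: algebra_simps)
qed

text \<open>The linear coefficients produced by the recurrence sum to constants, because the block
  sizes and the parts of every composition have fixed totals.\<close>
lemma sum_weak_compositions_grow_block:
  fixes s A :: "nat \<Rightarrow> nat"
  assumes s1: "\<forall>l<k. s l \<ge> 1"
  defines "W \<equiv> \<lambda>d. \<Prod>l<k. block_weight (s l) (A l) (d l)"
  shows "(\<Sum>j<k. \<Sum>d\<in>weak_compositions k (Suc M).
            \<Prod>l<k. if l = j then block_weight (Suc (s l)) (Suc (A l)) (d l) else block_weight (s l) (A l) (d l))
       = (2*real (Suc M) + real k - 2*(\<Sum>l<k. real (s l))) * (\<Sum>d\<in>weak_compositions k (Suc M). W d)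
         + (4*(\<Sum>l<k. real (A l)) + 3*real k - 2*real M) * (\<Sum>d\<in>weak_compositions k M. W d)"
proof -
  define F where "F j d = (4*real (A j) + 3 - 2*real (d j)) * W d" for j d
  have parts_sum: "(\<Sum>j<k. real (d j)) = real N" if "d \<in> weak_compositions k N" for d N
    using that by (simp add: mem_weak_compositions flip: of_nat_sum)
  have grow: "(\<Prod>l<k. if l = j then block_weight (Suc (s l)) (Suc (A l)) (d l) else block_weight (s l) (A l) (d l))
      = (2*real (d j) + 1 - 2*real (s j)) * W d + (if 0 < d j then F j (d(j := d j - 1)) else 0)"
    if "j < k" for j d
    unfolding F_def W_def using prod_block_weight_grow[of s j k A d] s1 that by simp
  have "(\<Sum>j<k. \<Sum>d\<in>weak_compositions k (Suc M).
            \<Prod>l<k. if l = j then block_weight (Suc (s l)) (Suc (A l)) (d l) else block_weight (s l) (A l) (d l))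
      = (\<Sum>j<k. \<Sum>d\<in>weak_compositions k (Suc M). (2*real (d j) + 1 - 2*real (s j)) * W d)
        + (\<Sum>j<k. \<Sum>d\<in>weak_compositions k (Suc M). if 0 < d j then F j (d(j := d j - 1)) else 0)"
    by (simp add: grow sum.distrib)
  also have "(\<Sum>j<k. \<Sum>d\<in>weak_compositions k (Suc M). if 0 < d j then F j (d(j := d j - 1)) else 0)
      = (\<Sum>d\<in>weak_compositions k M. \<Sum>j<k. F j d)"
    by (simp add: sum_weak_compositions_decrement sum.swap[of _ "{..<k}"])
  also have "\<dots> = (\<Sum>d\<in>weak_compositions k M. (4*(\<Sum>l<k. real (A l)) + 3*real k - 2*real M) * W d)"
    using parts_sum by (intro sum.cong refl)
      (simp add: F_def sum_distrib_right[symmetric] sum.distrib sum_subtractf sum_distrib_left[symmetric])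
  also have "(\<Sum>j<k. \<Sum>d\<in>weak_compositions k (Suc M). (2*real (d j) + 1 - 2*real (s j)) * W d)
      = (\<Sum>d\<in>weak_compositions k (Suc M). (2*real (Suc M) + real k - 2*(\<Sum>l<k. real (s l))) * W d)"
    using parts_sum by (subst sum.swap, intro sum.cong refl)
      (simp add: sum_distrib_right[symmetric] sum.distrib sum_subtractf sum_distrib_left[symmetric])
  finally show ?thesis by (simp add: sum_distrib_left)
qed

section \<open>Inserting an entry into a sequence\<close>

definition skip_index :: "nat \<Rightarrow> nat \<Rightarrow> nat" where
  "skip_index p j = (if j < p then j else Suc j)"

definition insert_at :: "nat \<Rightarrow> 'a \<Rightarrow> (nat \<Rightarrow> 'a) \<Rightarrow> nat \<Rightarrow> 'a" where
  "insert_at p x F = (\<lambda>j. if j < p then F j else if j = p then x else F (j - 1))"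

definition delete_at :: "nat \<Rightarrow> (nat \<Rightarrow> 'a) \<Rightarrow> nat \<Rightarrow> 'a" where
  "delete_at p F = (\<lambda>j. F (skip_index p j))"

lemma insert_at_skip_index [simp]: "insert_at p x F (skip_index p j) = F j"
  by (simp add: insert_at_def skip_index_def)

lemma insert_at_same [simp]: "insert_at p x F p = x"
  by (simp add: insert_at_def)

lemma delete_at_insert_at [simp]: "delete_at p (insert_at p x F) = F"
  by (simp add: delete_at_def)

lemma insert_at_delete_at: "insert_at p (F p) (delete_at p F) = F"
  by (auto simp: insert_at_def delete_at_def skip_index_def fun_eq_iff)

lemma notin_skip_index_image [simp]: "p \<notin> skip_index p ` A"
  by (auto simp: skip_index_def)

lemma skip_index_neq [simp]: "skip_index p j \<noteq> p"
  by (simp add: skip_index_def)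

lemma skip_index_eq_iff [simp]: "skip_index p i = skip_index p j \<longleftrightarrow> i = j"
  by (auto simp: skip_index_def split: if_splits)

lemma lessThan_Suc_eq_insert_skip_index:
  assumes "p \<le> k"
  shows "{..<Suc k} = insert p (skip_index p ` {..<k})"
proof (intro set_eqI iffI)
  fix x assume x: "x \<in> {..<Suc k}"
  consider "x < p" | "x = p" | y where "x = Suc y" "p \<le> y"
    by (metis less_Suc_eq_le not_less_eq_eq le_antisym not0_implies_Suc le0)
  then show "x \<in> insert p (skip_index p ` {..<k})"
  proof cases
    case 1
    then show ?thesis using assms image_eqI[of x "skip_index p" x] by (simp add: skip_index_def)
  next
    case 3
    then show ?thesis using x image_eqI[of x "skip_index p" y] by (simp add: skip_index_def)
  qed simp
qed (use assms in \<open>auto simp: skip_index_def\<close>)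

lemma prod_lessThan_Suc_skip_index:
  "p \<le> k \<Longrightarrow> (\<Prod>j<Suc k. G j) = G p * (\<Prod>j<k. G (skip_index p j))"
  by (simp add: lessThan_Suc_eq_insert_skip_index prod.reindex inj_on_def)

lemma sum_lessThan_Suc_skip_index:
  "p \<le> k \<Longrightarrow> (\<Sum>j<Suc k. G j) = G p + (\<Sum>j<k. G (skip_index p j))"
  by (simp add: lessThan_Suc_eq_insert_skip_index sum.reindex inj_on_def)

lemma UN_lessThan_Suc_skip_index:
  "p \<le> k \<Longrightarrow> (\<Union>j<Suc k. G j) = G p \<union> (\<Union>j<k. G (skip_index p j))"
  by (auto simp: lessThan_Suc_eq_insert_skip_index)

lemma sum_weak_compositions_insert_at:
  assumes p: "p \<le> k"
  shows "(\<Sum>d\<in>weak_compositions (Suc k) N. h (d p) * \<Phi> (delete_at p d))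
       = (\<Sum>e\<le>N. h e * (\<Sum>d\<in>weak_compositions k (N - e). (\<Phi> d :: 'a::comm_semiring_0)))"
proof -
  have "(\<Sum>e\<le>N. h e * (\<Sum>d\<in>weak_compositions k (N - e). \<Phi> d))
      = (\<Sum>(e,d)\<in>(SIGMA e:{..N}. weak_compositions k (N - e)). h e * \<Phi> d)"
    by (simp add: sum_distrib_left sum.Sigma finite_weak_compositions split_def)
  also have "\<dots> = (\<Sum>d\<in>weak_compositions (Suc k) N. h (d p) * \<Phi> (delete_at p d))"
  proof (rule sum.reindex_bij_witness[where i="\<lambda>d. (d p, delete_at p d)" and j="\<lambda>(e,d). insert_at p e d"])
    fix d assume d: "d \<in> weak_compositions (Suc k) N"
    then show "(case (d p, delete_at p d) of (e, d) \<Rightarrow> insert_at p e d) = d"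
      by (simp add: insert_at_delete_at)
    have "(\<Sum>j<Suc k. d j) = d p + (\<Sum>j<k. delete_at p d j)"
      using sum_lessThan_Suc_skip_index[OF p] by (simp add: delete_at_def)
    with d p show "(d p, delete_at p d) \<in> (SIGMA e:{..N}. weak_compositions k (N - e))"
      by (auto simp: mem_weak_compositions delete_at_def skip_index_def)
  next
    fix ed assume ed: "ed \<in> (SIGMA e:{..N}. weak_compositions k (N - e))"
    obtain e d where ed_eq: "ed = (e,d)" by (cases ed)
    with ed have e: "e \<le> N" and d: "d \<in> weak_compositions k (N - e)" by auto
    show "((case ed of (e, d) \<Rightarrow> insert_at p e d) p, delete_at p (case ed of (e, d) \<Rightarrow> insert_at p e d)) = ed"
      using ed_eq by simp
    have "(\<Sum>j<Suc k. insert_at p e d j) = e + (\<Sum>j<k. d j)"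
      using sum_lessThan_Suc_skip_index[OF p, of "insert_at p e d"] by simp
    with e d p show "(case ed of (e, d) \<Rightarrow> insert_at p e d) \<in> weak_compositions (Suc k) N"
      unfolding ed_eq by (auto simp: mem_weak_compositions insert_at_def)
  qed (auto split: prod.splits)
  finally show ?thesis by simp
qed

section \<open>Ordered set partitions\<close>

lemma mem_ordered_set_partitions:
  "I \<in> ordered_set_partitions m k \<longleftrightarrow>
     (\<forall>j<k. I j \<noteq> {}) \<and> (\<forall>j<k. \<forall>l<k. j \<noteq> l \<longrightarrow> I j \<inter> I l = {})
     \<and> (\<Union>j<k. I j) = {1..m} \<and> (\<forall>j\<ge>k. I j = {})"
  by (simp add: ordered_set_partitions_def)

lemma ordered_set_partitions_block_subset:
  "I \<in> ordered_set_partitions m k \<Longrightarrow> I j \<subseteq> {1..m}"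
  unfolding mem_ordered_set_partitions by (cases "j < k") auto

lemma finite_ordered_set_partitions_block:
  "I \<in> ordered_set_partitions m k \<Longrightarrow> finite (I j)"
  by (meson finite_atLeastAtMost finite_subset ordered_set_partitions_block_subset)

lemma Suc_notin_ordered_set_partitions_block:
  "I \<in> ordered_set_partitions m k \<Longrightarrow> Suc m \<notin> I j"
  using ordered_set_partitions_block_subset[of I m k j] by auto

lemma ordered_set_partitions_card_block_ge_1:
  "I \<in> ordered_set_partitions m k \<Longrightarrow> j < k \<Longrightarrow> card (I j) \<ge> 1"
  using finite_ordered_set_partitions_block[of I m k j]
  by (simp add: mem_ordered_set_partitions Suc_le_eq card_gt_0_iff)

lemma ordered_set_partitions_index_less:
  "I \<in> ordered_set_partitions m k \<Longrightarrow> x \<in> I j \<Longrightarrow> j < k"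
  unfolding mem_ordered_set_partitions by (metis empty_iff not_less)

lemma ordered_set_partitions_block_unique:
  assumes I: "I \<in> ordered_set_partitions m k" and "x \<in> I j" "x \<in> I l"
  shows "j = l"
proof (rule ccontr)
  assume "j \<noteq> l"
  moreover have "j < k" "l < k" using ordered_set_partitions_index_less[OF I] assms by auto
  ultimately have "I j \<inter> I l = {}" using I by (simp add: mem_ordered_set_partitions)
  with assms show False by blast
qed

lemma finite_ordered_set_partitions: "finite (ordered_set_partitions m k)"
proof (rule finite_subset)
  show "ordered_set_partitions m k
     \<subseteq> {I. \<forall>x. (x \<in> {..<k} \<longrightarrow> I x \<in> Pow {1..m}) \<and> (x \<notin> {..<k} \<longrightarrow> I x = {})}"
  proof (intro subsetI CollectI allI conjI impI)
    fix I x assume I: "I \<in> ordered_set_partitions m k"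
    show "I x \<in> Pow {1..m}" if "x \<in> {..<k}" using ordered_set_partitions_block_subset[OF I] by simp
    show "I x = {}" if "x \<notin> {..<k}" using I that by (simp add: mem_ordered_set_partitions)
  qed
  show "finite {I. \<forall>x. (x \<in> {..<k} \<longrightarrow> I x \<in> Pow {1..m}) \<and> (x \<notin> {..<k} \<longrightarrow> (I::nat\<Rightarrow>nat set) x = {})}"
    by (rule finite_set_of_finite_funs) auto
qed

lemma ordered_set_partitions_sum_blocks:
  assumes I: "I \<in> ordered_set_partitions m k"
  shows "(\<Sum>l<k. card (I l)) = m" "(\<Sum>l<k. sum a (I l)) = sum a {1..m}"
proof -
  have disj: "\<forall>i\<in>{..<k}. \<forall>j\<in>{..<k}. i \<noteq> j \<longrightarrow> I i \<inter> I j = {}"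
    and un: "(\<Union>j<k. I j) = {1..m}" using I unfolding mem_ordered_set_partitions by auto
  show "(\<Sum>l<k. card (I l)) = m"
    using card_UN_disjoint[of "{..<k}" I] finite_ordered_set_partitions_block[OF I] disj un by simp
  show "(\<Sum>l<k. sum a (I l)) = sum a {1..m}"
    using sum.UNION_disjoint[of "{..<k}" I a] finite_ordered_set_partitions_block[OF I] disj un by simp
qed

lemma ordered_set_partitions_0: "m \<ge> 1 \<Longrightarrow> ordered_set_partitions m 0 = {}"
  by (auto simp: mem_ordered_set_partitions)

lemma ordered_set_partitions_eq_empty: "k > m \<Longrightarrow> ordered_set_partitions m k = {}"
proof (rule ccontr)
  assume k: "k > m" and "ordered_set_partitions m k \<noteq> {}"
  then obtain I where I: "I \<in> ordered_set_partitions m k" by auto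
  then have "(\<Sum>l<k. 1) \<le> (\<Sum>l<k. card (I l))"
    using ordered_set_partitions_card_block_ge_1[OF I] by (intro sum_mono) simp
  then show False using ordered_set_partitions_sum_blocks(1)[OF I] k by simp
qed

lemma insert_at_singleton_ordered_set_partitions:
  assumes I: "I \<in> ordered_set_partitions n k" and p: "p \<le> k"
  shows "insert_at p {Suc n} I \<in> ordered_set_partitions (Suc n) (Suc k)"
proof -
  have ne: "\<And>j. j < k \<Longrightarrow> I j \<noteq> {}"
    and disj: "\<And>j l. j < k \<Longrightarrow> l < k \<Longrightarrow> j \<noteq> l \<Longrightarrow> I j \<inter> I l = {}"
    and un: "(\<Union>j<k. I j) = {1..n}" and empty: "\<And>j. j \<ge> k \<Longrightarrow> I j = {}"
    using I unfolding mem_ordered_set_partitions by auto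
  note fresh = Suc_notin_ordered_set_partitions_block[OF I]
  have "\<forall>j<Suc k. \<forall>l<Suc k. j \<noteq> l \<longrightarrow> insert_at p {Suc n} I j \<inter> insert_at p {Suc n} I l = {}"
  proof (intro allI impI)
    fix j l assume "j < Suc k" "l < Suc k" "j \<noteq> l"
    then show "insert_at p {Suc n} I j \<inter> insert_at p {Suc n} I l = {}"
      using p fresh disj[of j l] disj[of "j - 1" l] disj[of j "l - 1"] disj[of "j - 1" "l - 1"]
      unfolding insert_at_def by (auto split: if_splits)
  qed
  moreover have "(\<Union>j<Suc k. insert_at p {Suc n} I j) = {1..Suc n}"
    using UN_lessThan_Suc_skip_index[OF p, of "insert_at p {Suc n} I"] un by auto
  ultimately show ?thesis
    using ne empty p unfolding mem_ordered_set_partitions by (auto simp: insert_at_def)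
qed

lemma delete_at_singleton_ordered_set_partitions:
  assumes I: "I \<in> ordered_set_partitions (Suc n) (Suc k)" and Ip: "I p = {Suc n}"
  shows "p \<le> k" "delete_at p I \<in> ordered_set_partitions n k"
proof -
  show p: "p \<le> k" using ordered_set_partitions_index_less[OF I, of "Suc n" p] Ip by auto
  have ne: "\<And>j. j < Suc k \<Longrightarrow> I j \<noteq> {}"
    and disj: "\<And>j l. j < Suc k \<Longrightarrow> l < Suc k \<Longrightarrow> j \<noteq> l \<Longrightarrow> I j \<inter> I l = {}"
    and un: "(\<Union>j<Suc k. I j) = {1..Suc n}" and empty: "\<And>j. j \<ge> Suc k \<Longrightarrow> I j = {}"
    using I unfolding mem_ordered_set_partitions by auto
  have skip_less: "\<And>j. j < k \<Longrightarrow> skip_index p j < Suc k" by (auto simp: skip_index_def)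
  have "Suc n \<notin> I (skip_index p j)" for j
    using ordered_set_partitions_block_unique[OF I, of "Suc n" "skip_index p j" p] Ip by auto
  then have "(\<Union>j<k. I (skip_index p j)) = {1..Suc n} - {Suc n}"
    using UN_lessThan_Suc_skip_index[OF p, of I] un Ip by auto
  then have "(\<Union>j<k. delete_at p I j) = {1..n}" by (auto simp: delete_at_def)
  with ne disj empty skip_less p show "delete_at p I \<in> ordered_set_partitions n k"
    unfolding mem_ordered_set_partitions delete_at_def by (auto simp: skip_index_def)
qed

lemma insert_into_block_ordered_set_partitions:
  assumes I: "I \<in> ordered_set_partitions n k" and j: "j < k"
  shows "I(j := insert (Suc n) (I j)) \<in> ordered_set_partitions (Suc n) k"
proof -
  have ne: "\<forall>l<k. I l \<noteq> {}"
    and disj: "\<forall>i<k. \<forall>l<k. i \<noteq> l \<longrightarrow> I i \<inter> I l = {}"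
    and un: "(\<Union>l<k. I l) = {1..n}" and empty: "\<forall>l\<ge>k. I l = {}"
    using I unfolding mem_ordered_set_partitions by auto
  note fresh = Suc_notin_ordered_set_partitions_block[OF I]
  have "(\<Union>l<k. (I(j := insert (Suc n) (I j))) l) = insert (Suc n) (\<Union>l<k. I l)"
    using j by (auto split: if_splits)
  with un have "(\<Union>l<k. (I(j := insert (Suc n) (I j))) l) = {1..Suc n}" by auto
  moreover have "\<forall>i<k. \<forall>l<k. i \<noteq> l \<longrightarrow> (I(j := insert (Suc n) (I j))) i \<inter> (I(j := insert (Suc n) (I j))) l = {}"
    using disj fresh by auto
  moreover have "\<forall>l<k. (I(j := insert (Suc n) (I j))) l \<noteq> {}" "\<forall>l\<ge>k. (I(j := insert (Suc n) (I j))) l = {}"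
    using ne empty j by auto
  ultimately show ?thesis unfolding mem_ordered_set_partitions by blast
qed

lemma remove_from_block_ordered_set_partitions:
  assumes I: "I \<in> ordered_set_partitions (Suc n) k" and j: "Suc n \<in> I j" and ns: "I j \<noteq> {Suc n}"
  shows "j < k" "I(j := I j - {Suc n}) \<in> ordered_set_partitions n k"
proof -
  show jk: "j < k" using ordered_set_partitions_index_less[OF I j] .
  have ne: "\<forall>l<k. I l \<noteq> {}"
    and disj: "\<forall>i<k. \<forall>l<k. i \<noteq> l \<longrightarrow> I i \<inter> I l = {}"
    and un: "(\<Union>l<k. I l) = {1..Suc n}" and empty: "\<forall>l\<ge>k. I l = {}"
    using I unfolding mem_ordered_set_partitions by auto
  have "\<And>l. l \<noteq> j \<Longrightarrow> Suc n \<notin> I l"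
    using ordered_set_partitions_block_unique[OF I j] by blast
  then have "(\<Union>l<k. (I(j := I j - {Suc n})) l) = (\<Union>l<k. I l) - {Suc n}"
    using jk by (auto split: if_splits)
  with un have "(\<Union>l<k. (I(j := I j - {Suc n})) l) = {1..n}" by auto
  moreover have "\<forall>i<k. \<forall>l<k. i \<noteq> l \<longrightarrow> (I(j := I j - {Suc n})) i \<inter> (I(j := I j - {Suc n})) l = {}"
    using disj by auto
  moreover have "\<forall>l<k. (I(j := I j - {Suc n})) l \<noteq> {}" "\<forall>l\<ge>k. (I(j := I j - {Suc n})) l = {}"
    using ne empty jk ns j by auto
  ultimately show "I(j := I j - {Suc n}) \<in> ordered_set_partitions n k"
    unfolding mem_ordered_set_partitions by blast
qed

lemma bij_betw_insert_singleton_block: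
  "bij_betw (\<lambda>(p, I). insert_at p {Suc n} I) ({..k} \<times> ordered_set_partitions n k)
     {I \<in> ordered_set_partitions (Suc n) (Suc k). \<exists>p. I p = {Suc n}}"
proof (rule bij_betw_imageI)
  show "inj_on (\<lambda>(p, I). insert_at p {Suc n} I) ({..k} \<times> ordered_set_partitions n k)"
  proof (rule inj_onI, clarify)
    fix p I q J
    assume J: "J \<in> ordered_set_partitions n k" and eq: "insert_at p {Suc n} I = insert_at q {Suc n} J"
    have "Suc n \<in> insert_at q {Suc n} J p" using eq by (metis insert_at_same singletonI)
    then have "q = p"
      using Suc_notin_ordered_set_partitions_block[OF J] by (auto simp: insert_at_def split: if_splits)
    then show "p = q \<and> I = J" using eq by (metis delete_at_insert_at)
  qed
  show "(\<lambda>(p, I). insert_at p {Suc n} I) ` ({..k} \<times> ordered_set_partitions n k)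
      = {I \<in> ordered_set_partitions (Suc n) (Suc k). \<exists>p. I p = {Suc n}}"
  proof (intro equalityI subsetI)
    fix I' assume "I' \<in> (\<lambda>(p, I). insert_at p {Suc n} I) ` ({..k} \<times> ordered_set_partitions n k)"
    then obtain p I where "p \<le> k" "I \<in> ordered_set_partitions n k" and I': "I' = insert_at p {Suc n} I"
      by auto
    with insert_at_singleton_ordered_set_partitions
    show "I' \<in> {I \<in> ordered_set_partitions (Suc n) (Suc k). \<exists>p. I p = {Suc n}}"
      by (auto intro!: exI[where x=p])
  next
    fix I assume "I \<in> {I \<in> ordered_set_partitions (Suc n) (Suc k). \<exists>p. I p = {Suc n}}"
    then obtain p where I: "I \<in> ordered_set_partitions (Suc n) (Suc k)" and Ip: "I p = {Suc n}" by auto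
    have "I = insert_at p {Suc n} (delete_at p I)" using insert_at_delete_at[of p I] Ip by simp
    with delete_at_singleton_ordered_set_partitions[OF I Ip]
    show "I \<in> (\<lambda>(p, I). insert_at p {Suc n} I) ` ({..k} \<times> ordered_set_partitions n k)" by force
  qed
qed

lemma bij_betw_insert_into_block:
  "bij_betw (\<lambda>(j, I). I(j := insert (Suc n) (I j))) ({..<k} \<times> ordered_set_partitions n k)
     {I \<in> ordered_set_partitions (Suc n) k. \<nexists>p. I p = {Suc n}}"
proof (rule bij_betw_imageI)
  show "inj_on (\<lambda>(j, I). I(j := insert (Suc n) (I j))) ({..<k} \<times> ordered_set_partitions n k)"
  proof (rule inj_onI, clarify)
    fix p I q J
    assume I: "I \<in> ordered_set_partitions n k" and J: "J \<in> ordered_set_partitions n k"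
      and eq: "I(p := insert (Suc n) (I p)) = J(q := insert (Suc n) (J q))"
    note fresh = Suc_notin_ordered_set_partitions_block
    have "Suc n \<in> (J(q := insert (Suc n) (J q))) p" using eq by (metis fun_upd_same insertI1)
    then have "q = p" using fresh[OF J] by (auto split: if_splits)
    with eq have "insert (Suc n) (I p) = insert (Suc n) (J p)" by (metis fun_upd_same)
    then have "I p = J p" using fresh[OF I] fresh[OF J] by (metis insert_ident)
    with eq \<open>q = p\<close> have "I = J" by (metis fun_upd_idem_iff fun_upd_upd)
    with \<open>q = p\<close> show "p = q \<and> I = J" by simp
  qed
  show "(\<lambda>(j, I). I(j := insert (Suc n) (I j))) ` ({..<k} \<times> ordered_set_partitions n k)
      = {I \<in> ordered_set_partitions (Suc n) k. \<nexists>p. I p = {Suc n}}"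
  proof (intro equalityI subsetI)
    fix I' assume "I' \<in> (\<lambda>(j, I). I(j := insert (Suc n) (I j))) ` ({..<k} \<times> ordered_set_partitions n k)"
    then obtain j I where j: "j < k" and I: "I \<in> ordered_set_partitions n k"
      and I': "I' = I(j := insert (Suc n) (I j))" by auto
    have "I j \<noteq> {}" using I j unfolding mem_ordered_set_partitions by auto
    then have "I' p \<noteq> {Suc n}" for p
      using Suc_notin_ordered_set_partitions_block[OF I] unfolding I' by (cases "p = j") auto
    with insert_into_block_ordered_set_partitions[OF I j] I'
    show "I' \<in> {I \<in> ordered_set_partitions (Suc n) k. \<nexists>p. I p = {Suc n}}" by auto
  next
    fix I assume "I \<in> {I \<in> ordered_set_partitions (Suc n) k. \<nexists>p. I p = {Suc n}}"
    then have I: "I \<in> ordered_set_partitions (Suc n) k" and ns: "\<And>p. I p \<noteq> {Suc n}" by auto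
    have "Suc n \<in> (\<Union>j<k. I j)" using I unfolding mem_ordered_set_partitions by auto
    then obtain j where j: "Suc n \<in> I j" by auto
    have "I = (I(j := I j - {Suc n}))(j := insert (Suc n) ((I(j := I j - {Suc n})) j))"
      using j by (simp add: insert_absorb)
    with remove_from_block_ordered_set_partitions[OF I j ns]
    show "I \<in> (\<lambda>(j, I). I(j := insert (Suc n) (I j))) ` ({..<k} \<times> ordered_set_partitions n k)"
      by (intro image_eqI[where x="(j, I(j := I j - {Suc n}))"]) auto
  qed
qed

lemma sum_ordered_set_partitions_Suc:
  "(\<Sum>I\<in>ordered_set_partitions (Suc n) (Suc k). G I)
   = (\<Sum>p\<le>k. \<Sum>I\<in>ordered_set_partitions n k. G (insert_at p {Suc n} I))
   + (\<Sum>j<Suc k. \<Sum>I\<in>ordered_set_partitions n (Suc k). (G (I(j := insert (Suc n) (I j))) :: 'a::comm_monoid_add))"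
proof -
  let ?S = "ordered_set_partitions (Suc n) (Suc k)"
  have "?S = {I\<in>?S. \<exists>p. I p = {Suc n}} \<union> {I\<in>?S. \<nexists>p. I p = {Suc n}}" by blast
  then have "(\<Sum>I\<in>?S. G I) = (\<Sum>I\<in>{I\<in>?S. \<exists>p. I p = {Suc n}}. G I) + (\<Sum>I\<in>{I\<in>?S. \<nexists>p. I p = {Suc n}}. G I)"
    using finite_ordered_set_partitions by (metis (no_types, lifting) sum.union_disjoint
        finite_Un disjoint_iff mem_Collect_eq)
  also have "\<dots> = (\<Sum>x\<in>{..k} \<times> ordered_set_partitions n k. G ((\<lambda>(p, I). insert_at p {Suc n} I) x))
      + (\<Sum>x\<in>{..<Suc k} \<times> ordered_set_partitions n (Suc k). G ((\<lambda>(j, I). I(j := insert (Suc n) (I j))) x))"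
    using sum.reindex_bij_betw[OF bij_betw_insert_singleton_block, of G]
      sum.reindex_bij_betw[OF bij_betw_insert_into_block, of G] by simp
  finally show ?thesis by (simp add: sum.cartesian_product split_def)
qed

section \<open>Appending the argument 1\<close>

definition partition_term :: "(nat \<Rightarrow> nat) \<Rightarrow> (nat \<Rightarrow> nat set) \<Rightarrow> nat \<Rightarrow> nat \<Rightarrow> real" where
  "partition_term a I k N =
     (\<Sum>d\<in>weak_compositions k N. \<Prod>j<k. block_weight (card (I j)) (sum a (I j)) (d j))"

definition P_coeff :: "nat \<Rightarrow> nat \<Rightarrow> real" where
  "P_coeff g k = (-1)^k * fact (2*g-3+k) / fact k"

definition partition_sum :: "(nat \<Rightarrow> nat) \<Rightarrow> nat \<Rightarrow> nat \<Rightarrow> nat \<Rightarrow> real" where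
  "partition_sum a m k N = (\<Sum>I\<in>ordered_set_partitions m k. partition_term a I k N)"

lemma P_eq_sum_partition_sum:
  "P g m a = (\<Sum>k=1..m. P_coeff g k * partition_sum a m k (g-2+m))"
  by (simp add: P_def partition_sum_def partition_term_def block_weight_def P_coeff_def)

lemma P_coeff_Suc:
  assumes "g \<ge> 2"
  shows "P_coeff g (Suc k) * real (Suc k) = - (2*real g - 2 + real k) * P_coeff g k"
proof -
  define F where "F = (fact (2*g-3+k) :: real)"
  have "(fact (2*g-3 + Suc k) :: real) = real (Suc (2*g-3+k)) * F"
    unfolding F_def by (metis add_Suc_right fact_Suc)
  also have "real (Suc (2*g-3+k)) = 2*real g - 2 + real k"
    using assms by simp
  finally have fact_eq: "(fact (2*g-3 + Suc k) :: real) = (2*real g - 2 + real k) * F" .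
  have "P_coeff g (Suc k) * real (Suc k)
      = - ((-1)^k * ((2*real g - 2 + real k) * F)) / (real (Suc k) * fact k) * real (Suc k)"
    unfolding P_coeff_def fact_eq fact_Suc[of k] by simp
  also have "\<dots> = - (2*real g - 2 + real k) * P_coeff g k"
    unfolding P_coeff_def F_def[symmetric] by (simp add: field_simps del: of_nat_Suc)
  finally show ?thesis .
qed

lemma sum_binomial_3_even:
  "(\<Sum>e\<le>Suc M. real (3 choose (2*e)) * X (Suc M - e)) = X (Suc M) + 3 * (X M :: real)"
proof -
  have "(\<Sum>e\<le>Suc M. real (3 choose (2*e)) * X (Suc M - e)) = (\<Sum>e\<in>{0,1}. real (3 choose (2*e)) * X (Suc M - e))"
    by (rule sum.mono_neutral_right) (auto simp: binomial_eq_0)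
  then show ?thesis by (simp add: numeral_3_eq_3 numeral_2_eq_2)
qed

lemma partition_term_insert_singleton:
  assumes I: "I \<in> ordered_set_partitions n k" and p: "p \<le> k"
  shows "partition_term (a(Suc n := 1)) (insert_at p {Suc n} I) (Suc k) (Suc M)
       = partition_term a I k (Suc M) + 3 * partition_term a I k M"
proof -
  have "sum (a(Suc n := 1)) (I j) = sum a (I j)" "(\<Sum>x\<in>I j. if x = Suc n then Suc 0 else a x) = sum a (I j)" for j
    using Suc_notin_ordered_set_partitions_block[OF I] by (auto intro!: sum.cong)
  then have "partition_term (a(Suc n := 1)) (insert_at p {Suc n} I) (Suc k) (Suc M)
      = (\<Sum>d\<in>weak_compositions (Suc k) (Suc M).
           block_weight 1 1 (d p) * (\<Prod>j<k. block_weight (card (I j)) (sum a (I j)) (delete_at p d j)))"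
    unfolding partition_term_def
    by (intro sum.cong refl, subst prod_lessThan_Suc_skip_index[OF p]) (simp add: delete_at_def)
  also have "\<dots> = (\<Sum>e\<le>Suc M. block_weight 1 1 e *
      (\<Sum>d\<in>weak_compositions k (Suc M - e). \<Prod>j<k. block_weight (card (I j)) (sum a (I j)) (d j)))"
    by (rule sum_weak_compositions_insert_at[OF p])
  also have "\<dots> = (\<Sum>e\<le>Suc M. real (3 choose (2*e)) * partition_term a I k (Suc M - e))"
    by (simp add: block_weight_def partition_term_def)
  also have "\<dots> = partition_term a I k (Suc M) + 3 * partition_term a I k M"
    by (rule sum_binomial_3_even)
  finally show ?thesis .
qed

lemma sum_partition_term_insert_into_block:
  assumes I: "I \<in> ordered_set_partitions n k"
  shows "(\<Sum>j<k. partition_term (a(Suc n := 1)) (I(j := insert (Suc n) (I j))) k (Suc M))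
       = (2*real (Suc M) + real k - 2*real n) * partition_term a I k (Suc M)
         + (4*real (sum a {1..n}) + 3*real k - 2*real M) * partition_term a I k M"
proof -
  note fresh = Suc_notin_ordered_set_partitions_block[OF I]
  have sum_upd: "sum (a(Suc n := 1)) (I l) = sum a (I l)"
    "(\<Sum>x\<in>I l. if x = Suc n then Suc 0 else a x) = sum a (I l)" for l
    using fresh by (auto intro!: sum.cong)
  have "partition_term (a(Suc n := 1)) (I(j := insert (Suc n) (I j))) k (Suc M)
      = (\<Sum>d\<in>weak_compositions k (Suc M). \<Prod>l<k. if l = j
           then block_weight (Suc (card (I l))) (Suc (sum a (I l))) (d l)
           else block_weight (card (I l)) (sum a (I l)) (d l))" for j
    unfolding partition_term_def using fresh finite_ordered_set_partitions_block[OF I]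
    by (intro sum.cong prod.cong refl) (auto simp: sum_upd)
  moreover have "(\<Sum>l<k. real (card (I l))) = real n" "(\<Sum>l<k. real (sum a (I l))) = real (sum a {1..n})"
    using ordered_set_partitions_sum_blocks[OF I] by (simp_all flip: of_nat_sum)
  ultimately show ?thesis
    using sum_weak_compositions_grow_block[of k "\<lambda>l. card (I l)" "\<lambda>l. sum a (I l)" M]
      ordered_set_partitions_card_block_ge_1[OF I] by (simp add: partition_term_def)
qed

lemma partition_sum_Suc_Suc:
  "partition_sum (a(Suc n := 1)) (Suc n) (Suc k) (Suc M)
   = real (Suc k) * (partition_sum a n k (Suc M) + 3 * partition_sum a n k M)
     + (2*real (Suc M) + real (Suc k) - 2*real n) * partition_sum a n (Suc k) (Suc M)
     + (4*real (sum a {1..n}) + 3*real (Suc k) - 2*real M) * partition_sum a n (Suc k) M"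
proof -
  have "(\<Sum>p\<le>k. \<Sum>I\<in>ordered_set_partitions n k. partition_term (a(Suc n := 1)) (insert_at p {Suc n} I) (Suc k) (Suc M))
      = (\<Sum>p\<le>k. \<Sum>I\<in>ordered_set_partitions n k. partition_term a I k (Suc M) + 3 * partition_term a I k M)"
    by (intro sum.cong refl partition_term_insert_singleton) auto
  moreover have "(\<Sum>j<Suc k. \<Sum>I\<in>ordered_set_partitions n (Suc k).
        partition_term (a(Suc n := 1)) (I(j := insert (Suc n) (I j))) (Suc k) (Suc M))
      = (\<Sum>I\<in>ordered_set_partitions n (Suc k).
          (2*real (Suc M) + real (Suc k) - 2*real n) * partition_term a I (Suc k) (Suc M)
          + (4*real (sum a {1..n}) + 3*real (Suc k) - 2*real M) * partition_term a I (Suc k) M)"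
    by (subst sum.swap) (intro sum.cong refl sum_partition_term_insert_into_block)
  ultimately show ?thesis
    unfolding partition_sum_def sum_ordered_set_partitions_Suc
    by (simp add: sum.distrib sum_distrib_left del: of_nat_Suc)
qed

lemma sum_atLeast0_atMost_shift_Suc:
  assumes "U 0 = 0" and "V (Suc n) = 0"
  shows "(\<Sum>k=0..n. U k + V (Suc k)) = (\<Sum>k=1..n. U k + (V k :: 'a::comm_monoid_add))"
proof -
  have "(\<Sum>k=0..n. U k) = (\<Sum>k=1..n. U k)"
    using assms(1) by (simp add: sum.atLeast_Suc_atMost)
  moreover have "(\<Sum>k=0..n. V (Suc k)) = (\<Sum>k=1..n. V k)"
    using assms(2) by (simp add: sum.shift_bounds_cl_Suc_ivl[symmetric])
  ultimately show ?thesis by (simp add: sum.distrib)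
qed

lemma P_append_one:
  assumes g: "g \<ge> 2" and n: "n \<ge> 1" and sum_a: "sum a {1..n} = 2*g-3+n"
  shows "P g (Suc n) (a(Suc n := 1)) = (2*real n - 2) * P g n a"
proof -
  define M where "M = g-2+n"
  define S where "S k N = partition_sum a n k N" for k N
  define U where "U k = P_coeff g (Suc k) * real (Suc k) * (S k (Suc M) + 3 * S k M)" for k
  define V where "V k = P_coeff g k * ((2*real (Suc M) + real k - 2*real n) * S k (Suc M)
    + (4*real (sum a {1..n}) + 3*real k - 2*real M) * S k M)" for k
  have "P g (Suc n) (a(Suc n := 1))
      = (\<Sum>k=Suc 0..Suc n. P_coeff g k * partition_sum (a(Suc n := 1)) (Suc n) k (Suc M))"
    by (simp add: P_eq_sum_partition_sum M_def)
  also have "\<dots> = (\<Sum>k=0..n. P_coeff g (Suc k) * partition_sum (a(Suc n := 1)) (Suc n) (Suc k) (Suc M))"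
    by (rule sum.shift_bounds_cl_Suc_ivl)
  also have "\<dots> = (\<Sum>k=0..n. U k + V (Suc k))"
    unfolding partition_sum_Suc_Suc U_def V_def S_def by (intro sum.cong refl) (simp add: algebra_simps)
  also have "\<dots> = (\<Sum>k=1..n. U k + V k)"
    by (rule sum_atLeast0_atMost_shift_Suc)
      (simp_all add: U_def V_def S_def partition_sum_def ordered_set_partitions_0[OF n]
        ordered_set_partitions_eq_empty)
  also have "\<dots> = (\<Sum>k=1..n. (2*real n - 2) * (P_coeff g k * S k M))"
  proof (intro sum.cong refl)
    fix k
    have M_eq: "real M = real g - 2 + real n" and sum_eq: "real (sum a {1..n}) = 2*real g - 3 + real n"
      using g sum_a by (simp_all add: M_def)
    show "U k + V k = (2*real n - 2) * (P_coeff g k * S k M)"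
      unfolding U_def V_def P_coeff_Suc[OF g] unfolding of_nat_Suc M_eq sum_eq by (simp add: algebra_simps)
  qed
  also have "\<dots> = (2*real n - 2) * P g n a"
    by (simp add: P_eq_sum_partition_sum S_def M_def sum_distrib_left)
  finally show ?thesis .
qed

theorem corollary5p6:
  fixes g n :: nat and a :: "nat \<Rightarrow> nat"
  assumes "g \<ge> 2" and "n \<ge> 1"
    and "(\<Sum>i=1..n. a i) = 2*g-3+n"
  shows "P g (n+1) (a(n+1 := 1)) = (2 * real n - 2) * P g n a
         \<and> P g 2 ((\<lambda>_. 0)(1 := 2*g-2, 2 := 1)) = 0
         \<and> (n \<ge> 2 \<longrightarrow> P g n a = 0 \<longrightarrow> P g (n+1) (a(n+1 := 1)) = 0)"
proof -
  have extend: "P g (n+1) (a(n+1 := 1)) = (2 * real n - 2) * P g n a"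
    using P_append_one[OF assms] by simp
  have "sum ((\<lambda>_. 0)(1 := 2*g-2) :: nat \<Rightarrow> nat) {1..1} = 2*g-3+1"
    using assms(1) by simp
  from P_append_one[OF assms(1) _ this]
  have "P g 2 ((\<lambda>_. 0)(1 := 2*g-2, 2 := 1)) = 0"
    by (simp add: numeral_2_eq_2)
  with extend show ?thesis by simp
qed

end
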